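(* For $\epsilon\ll1$ and $a$ belonging to a bounded interval, let $u_{\epsilon,a}$ be solutions of $\epsilon^2\Delta u+\mu u-|u|^2u+\epsilon af=0$ on $\mathbb{R}^2$ converging to $0$ as $|x|\to\infty$. Then there exists a constant $K>0$ such that $$|u_{\epsilon,a}(x)|\leq K\big(\sqrt{\max(\mu(x),0)}+\epsilon^{1/3}\big),\qquad\forall x\in\mathbb{R}^2.$$ As a consequence, if for every $\xi=\rho e^{i\theta}$ one considers the local coordinates $s=(s_1,s_2)$ in the basis $(e^{i\theta},ie^{i\theta})$, then the rescaled maps $\tilde u_{\epsilon,a}(s)=\epsilon^{-1/3}u_{\epsilon,a}(\xi+s\epsilon^{2/3})$ are uniformly bounded on the half-planes $[s_0,\infty)\times\mathbb{R}$, for every $s_0\in\mathbb{R}$.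
   Context: Points of $\mathbb{R}^2$ are identified with complex numbers. $\mu\in C^\infty(\mathbb{R}^2,\mathbb{R})$ is radial, $\mu(x)=\mu_{\mathrm{rad}}(|x|)$, $\mu_{\mathrm{rad}}$ smooth with an even extension, $\mu\in L^\infty$, $\mu_{\mathrm{rad}}'<0$ on $(0,\infty)$, $\mu_{\mathrm{rad}}(\rho)=0$ for a unique $\rho>0$. $f\in C^\infty(\mathbb{R}^2,\mathbb{R}^2)$, $f(x)=f_{\mathrm{rad}}(|x|)\frac{x}{|x|}$, $f_{\mathrm{rad}}$ smooth with an odd extension, $f\in L^1\cap L^\infty$, $f_{\mathrm{rad}}>0$ on $(0,\infty)$. *)

theory Defs
  imports "HOL-Analysis.Analysis"
begin

text \<open>C-infinity: differentiable everywhere, and every directional (Frechet) derivative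
  is again C-infinity (all iterated derivatives exist everywhere).\<close>
coinductive smooth :: "('a::real_normed_vector \<Rightarrow> 'b::real_normed_vector) \<Rightarrow> bool" where
  smoothI: "(\<forall>x. g differentiable (at x)) \<Longrightarrow> (\<forall>v. smooth (\<lambda>x. frechet_derivative g (at x) v))
            \<Longrightarrow> smooth g"

definition dir_deriv :: "(complex \<Rightarrow> complex) \<Rightarrow> complex \<Rightarrow> complex \<Rightarrow> complex" where
  "dir_deriv g v x = frechet_derivative g (at x) v"

definition twice_differentiable :: "(complex \<Rightarrow> complex) \<Rightarrow> bool" where
  "twice_differentiable g \<longleftrightarrow> (\<forall>x. g differentiable (at x)) \<and>
     (\<forall>v x. (\<lambda>y. dir_deriv g v y) differentiable (at x))"

definition laplacian :: "(complex \<Rightarrow> complex) \<Rightarrow> complex \<Rightarrow> complex" where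
  "laplacian g x = dir_deriv (\<lambda>y. dir_deriv g 1 y) 1 x + dir_deriv (\<lambda>y. dir_deriv g \<i> y) \<i> x"

end

theory Submission
  imports Defs
begin

text \<open>Maximum principle with a barrier. As \<open>\<mu>\<close> is radial and decreasing with a simple zero
  at \<open>\<rho>\<close>, \<open>max \<mu> 0\<close> is comparable to \<open>max (\<rho>\<^sup>2 - |x|\<^sup>2) 0\<close>, so it suffices to bound \<open>|u|\<^sup>2\<close> by
  \<open>B = K\<^sup>2\<epsilon>\<^sup>2\<^sup>/\<^sup>3 + \<Lambda>(\<tau> + sqrt(\<tau>\<^sup>2 + \<delta>\<^sup>2))\<close> with \<open>\<tau> = \<rho>\<^sup>2 - |x|\<^sup>2\<close> and \<open>\<delta> = \<epsilon>\<^sup>2\<^sup>/\<^sup>3\<close>: a smoothing of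
  \<open>K\<^sup>2\<epsilon>\<^sup>2\<^sup>/\<^sup>3 + 2\<Lambda> max \<tau> 0 \<ge> K\<^sup>2\<epsilon>\<^sup>2\<^sup>/\<^sup>3 + 2 max \<mu> 0\<close> whose Laplacian is \<open>O(1/\<delta>)\<close>.
  If \<open>|u|\<^sup>2 - B\<close> were positive somewhere, it would attain a positive maximum, since \<open>u \<rightarrow> 0\<close>.
  There the second-derivative test gives \<open>2 Re(conj u \<Delta>u) \<le> \<Delta>B = O(1/\<delta>)\<close>, while the equation gives
  \<open>\<epsilon>\<^sup>2 Re(conj u \<Delta>u) = |u|\<^sup>4 - \<mu>|u|\<^sup>2 - \<epsilon>a Re(conj u f) \<ge> |u|\<^sup>4/2 - \<epsilon>|a||f||u|\<close> because \<open>\<mu> < |u|\<^sup>2/2\<close>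
  there; for \<open>|u| > K\<epsilon>\<^sup>1\<^sup>/\<^sup>3\<close> with \<open>K\<close> large these are incompatible. In the rescaled coordinates
  \<open>\<rho>\<^sup>2 - |x|\<^sup>2 \<le> 2\<rho>\<epsilon>\<^sup>2\<^sup>/\<^sup>3 max (-s\<^sub>0) 0\<close> on the half-plane \<open>s\<^sub>1 \<ge> s\<^sub>0\<close>, whence the second claim.
  Of the forcing term only its boundedness is used.\<close>

section \<open>Second-derivative test along lines\<close>

lemma has_vector_derivative_along_line:
  fixes u :: "complex \<Rightarrow> complex"
  assumes "u differentiable (at (x0 + of_real t * v))"
  shows "((\<lambda>t. u (x0 + of_real t * v)) has_vector_derivative dir_deriv u v (x0 + of_real t * v)) (at t)"
proof -
  let ?F = "frechet_derivative u (at (x0 + of_real t * v))"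
  have du: "(u has_derivative ?F) (at (x0 + of_real t * v))"
    using assms frechet_derivative_works by blast
  have line: "((\<lambda>t. x0 + of_real t * v) has_derivative (\<lambda>h. h *\<^sub>R v)) (at t)"
    by (auto intro!: derivative_eq_intros simp: scaleR_conv_of_real)
  have "(?F \<circ> (\<lambda>h. h *\<^sub>R v)) = (\<lambda>h. h *\<^sub>R ?F v)"
    using has_derivative_bounded_linear[OF du]
    by (auto simp: fun_eq_iff linear_scale bounded_linear.linear)
  with diff_chain_at[OF line du] show ?thesis
    unfolding has_vector_derivative_def dir_deriv_def o_def by simp
qed

lemma second_deriv_nonpos_at_max:
  fixes \<Phi> \<Phi>' :: "real \<Rightarrow> real"
  assumes d1: "\<And>t. (\<Phi> has_real_derivative \<Phi>' t) (at t)"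
    and d2: "(\<Phi>' has_real_derivative D) (at 0)" and max: "\<And>t. \<Phi> t \<le> \<Phi> 0"
  shows "D \<le> 0"
proof (rule ccontr)
  assume "\<not> D \<le> 0"
  then obtain d where d: "d > 0" "\<And>h. h > 0 \<Longrightarrow> h < d \<Longrightarrow> \<Phi>' 0 < \<Phi>' (0 + h)"
    using DERIV_pos_inc_right[OF d2] by (meson not_le)
  have "\<Phi>' 0 = 0"
    using DERIV_local_max[OF d1[of 0], of 1] max by auto
  obtain z where z: "0 < z" "z < d/2" "\<Phi> (d/2) - \<Phi> 0 = d/2 * \<Phi>' z"
    using MVT2[of 0 "d/2" \<Phi> \<Phi>'] d1 d(1) by auto
  have "\<Phi>' z > 0"
    using d(2)[of z] z \<open>\<Phi>' 0 = 0\<close> by auto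
  with z d(1) have "\<Phi> (d/2) > \<Phi> 0"
    by (metis diff_gt_0_iff_gt half_gt_zero mult_pos_pos)
  with max show False by (meson not_le)
qed

text \<open>The left-hand side is the second derivative of \<open>|u|\<^sup>2\<close> along the line \<open>x0 + t v\<close> at \<open>t = 0\<close>.\<close>
lemma second_deriv_test_along_line:
  fixes u :: "complex \<Rightarrow> complex" and B B' :: "real \<Rightarrow> real"
  assumes tw: "twice_differentiable u"
    and B1: "\<And>t. (B has_real_derivative B' t) (at t)"
    and B2: "(B' has_real_derivative B'') (at 0)"
    and max: "\<And>t. (cmod (u (x0 + of_real t * v)))\<^sup>2 - B t \<le> (cmod (u x0))\<^sup>2 - B 0"
  shows "2 * (cmod (dir_deriv u v x0))\<^sup>2 + 2 * Re (cnj (u x0) * dir_deriv (dir_deriv u v) v x0) \<le> B''"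
proof -
  define g where "g t = u (x0 + of_real t * v)" for t
  define h where "h t = dir_deriv u v (x0 + of_real t * v)" for t
  define dd where "dd = dir_deriv (dir_deriv u v) v x0"
  have du: "u differentiable (at y)" and ddu: "dir_deriv u v differentiable (at y)" for y
    using tw unfolding twice_differentiable_def by auto
  have g': "(g has_vector_derivative h t) (at t)" for t
    unfolding g_def h_def using du by (rule has_vector_derivative_along_line)
  have h': "(h has_vector_derivative dd) (at 0)"
    using has_vector_derivative_along_line[of "dir_deriv u v" x0 0 v] ddu
    unfolding h_def dd_def by simp
  define W where "W t = Re (cnj (g t) * g t)" for t
  define W' where "W' t = Re (cnj (g t) * h t + cnj (h t) * g t)" for t
  have W_eq: "W t = (cmod (g t))\<^sup>2" for t
    unfolding W_def by (simp add: cmod_power2; simp add: power2_eq_square algebra_simps)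
  have W': "(W has_real_derivative W' t) (at t)" for t
  proof -
    have "((\<lambda>t. cnj (g t) * g t) has_vector_derivative (cnj (g t) * h t + cnj (h t) * g t)) (at t)"
      by (rule has_vector_derivative_mult[OF has_vector_derivative_cnj[OF g'] g'])
    from bounded_linear.has_vector_derivative[OF bounded_linear_Re this] show ?thesis
      unfolding W_def W'_def has_real_derivative_iff_has_vector_derivative .
  qed
  have W'': "(W' has_real_derivative (2 * (cmod (h 0))\<^sup>2 + 2 * Re (cnj (g 0) * dd))) (at 0)"
  proof -
    have "((\<lambda>t. cnj (g t) * h t + cnj (h t) * g t) has_vector_derivative
       ((cnj (g 0) * dd + cnj (h 0) * h 0) + (cnj (h 0) * h 0 + cnj dd * g 0))) (at 0)"
      by (intro has_vector_derivative_add has_vector_derivative_mult has_vector_derivative_cnj g' h')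
    from bounded_linear.has_vector_derivative[OF bounded_linear_Re this]
    have "(W' has_real_derivative Re ((cnj (g 0) * dd + cnj (h 0) * h 0) + (cnj (h 0) * h 0 + cnj dd * g 0))) (at 0)"
      unfolding W'_def has_real_derivative_iff_has_vector_derivative .
    moreover have "Re ((cnj (g 0) * dd + cnj (h 0) * h 0) + (cnj (h 0) * h 0 + cnj dd * g 0))
        = 2 * (cmod (h 0))\<^sup>2 + 2 * Re (cnj (g 0) * dd)"
      by (simp add: cmod_power2; simp add: power2_eq_square algebra_simps)
    ultimately show ?thesis by metis
  qed
  have "2 * (cmod (h 0))\<^sup>2 + 2 * Re (cnj (g 0) * dd) - B'' \<le> 0"
  proof (rule second_deriv_nonpos_at_max)
    show "((\<lambda>t. W t - B t) has_real_derivative W' t - B' t) (at t)" for t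
      using W' B1 by (intro derivative_intros) auto
    show "((\<lambda>t. W' t - B' t) has_real_derivative 2 * (cmod (h 0))\<^sup>2 + 2 * Re (cnj (g 0) * dd) - B'') (at 0)"
      using W'' B2 by (intro derivative_intros) auto
    show "W t - B t \<le> W 0 - B 0" for t
      using max[of t] unfolding W_eq g_def by simp
  qed
  moreover have "h 0 = dir_deriv u v x0" "g 0 = u x0"
    unfolding h_def g_def by simp_all
  ultimately show ?thesis unfolding dd_def diff_le_0_iff_le by (simp only:)
qed

section \<open>A smoothed ramp\<close>

definition smooth_ramp :: "real \<Rightarrow> real \<Rightarrow> real \<Rightarrow> real" where
  "smooth_ramp \<Lambda> \<delta> \<tau> = \<Lambda> * (\<tau> + sqrt (\<tau>\<^sup>2 + \<delta>\<^sup>2))"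

definition smooth_ramp' :: "real \<Rightarrow> real \<Rightarrow> real \<Rightarrow> real" where
  "smooth_ramp' \<Lambda> \<delta> \<tau> = \<Lambda> * (1 + \<tau> / sqrt (\<tau>\<^sup>2 + \<delta>\<^sup>2))"

definition smooth_ramp'' :: "real \<Rightarrow> real \<Rightarrow> real \<Rightarrow> real" where
  "smooth_ramp'' \<Lambda> \<delta> \<tau> = \<Lambda> * \<delta>\<^sup>2 / (sqrt (\<tau>\<^sup>2 + \<delta>\<^sup>2))^3"

lemma has_real_derivative_smooth_ramp:
  assumes "\<delta> > 0"
  shows "(smooth_ramp \<Lambda> \<delta> has_real_derivative smooth_ramp' \<Lambda> \<delta> \<tau>) (at \<tau>)"
proof -
  have "\<tau>\<^sup>2 + \<delta>\<^sup>2 > 0" using assms by (simp add: add_nonneg_pos)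
  then show ?thesis unfolding smooth_ramp_def[abs_def] smooth_ramp'_def
    by (auto intro!: derivative_eq_intros simp: field_simps)
qed

lemma has_real_derivative_smooth_ramp':
  assumes "\<delta> > 0"
  shows "(smooth_ramp' \<Lambda> \<delta> has_real_derivative smooth_ramp'' \<Lambda> \<delta> \<tau>) (at \<tau>)"
proof -
  define S where "S = sqrt (\<tau>\<^sup>2 + \<delta>\<^sup>2)"
  have S: "S > 0" "S\<^sup>2 = \<tau>\<^sup>2 + \<delta>\<^sup>2"
    using assms unfolding S_def by (simp_all add: add_nonneg_pos)
  have "(S - \<tau> * (inverse S * \<tau>)) * \<Lambda> / (\<tau>\<^sup>2 + \<delta>\<^sup>2) = \<Lambda> * \<delta>\<^sup>2 / S ^ 3"
  proof -
    have "S - \<tau> * (inverse S * \<tau>) = \<delta>\<^sup>2 / S"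
      using S by (simp add: field_simps power2_eq_square)
    then show ?thesis
      using S by (simp add: power3_eq_cube power2_eq_square field_simps)
  qed
  with S show ?thesis unfolding smooth_ramp'_def[abs_def] smooth_ramp''_def S_def
    by (auto intro!: derivative_eq_intros)
qed

lemma has_real_derivative_smooth_ramp_parabola:
  assumes "\<delta> > 0"
  shows "((\<lambda>t. c + smooth_ramp \<Lambda> \<delta> (\<alpha> - (\<beta> + t)\<^sup>2)) has_real_derivative
           smooth_ramp' \<Lambda> \<delta> (\<alpha> - (\<beta> + t)\<^sup>2) * (- 2 * (\<beta> + t))) (at t)"
proof -
  have "((\<lambda>t. smooth_ramp \<Lambda> \<delta> (\<alpha> - (\<beta> + t)\<^sup>2)) has_real_derivative
           smooth_ramp' \<Lambda> \<delta> (\<alpha> - (\<beta> + t)\<^sup>2) * (- 2 * (\<beta> + t))) (at t)"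
    by (rule DERIV_chain2[OF has_real_derivative_smooth_ramp[OF assms]])
       (auto intro!: derivative_eq_intros)
  then show ?thesis by (auto intro!: derivative_eq_intros)
qed

lemma has_real_derivative_smooth_ramp'_parabola:
  assumes "\<delta> > 0"
  shows "((\<lambda>t. smooth_ramp' \<Lambda> \<delta> (\<alpha> - (\<beta> + t)\<^sup>2) * (- 2 * (\<beta> + t))) has_real_derivative
           smooth_ramp'' \<Lambda> \<delta> (\<alpha> - \<beta>\<^sup>2) * (4 * \<beta>\<^sup>2) - 2 * smooth_ramp' \<Lambda> \<delta> (\<alpha> - \<beta>\<^sup>2)) (at 0)"
proof -
  have "((\<lambda>t. smooth_ramp' \<Lambda> \<delta> (\<alpha> - (\<beta> + t)\<^sup>2)) has_real_derivative
           smooth_ramp'' \<Lambda> \<delta> (\<alpha> - (\<beta> + 0)\<^sup>2) * (- 2 * (\<beta> + 0))) (at 0)"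
    by (rule DERIV_chain2[OF has_real_derivative_smooth_ramp'[OF assms]])
       (auto intro!: derivative_eq_intros)
  then have "((\<lambda>t. smooth_ramp' \<Lambda> \<delta> (\<alpha> - (\<beta> + t)\<^sup>2) * (- 2 * (\<beta> + t))) has_real_derivative
      smooth_ramp'' \<Lambda> \<delta> (\<alpha> - (\<beta> + 0)\<^sup>2) * (- 2 * (\<beta> + 0)) * (- 2 * (\<beta> + 0))
      + smooth_ramp' \<Lambda> \<delta> (\<alpha> - (\<beta> + 0)\<^sup>2) * (-2)) (at 0)"
    by (auto intro!: derivative_eq_intros)
  then show ?thesis by (simp add: power2_eq_square algebra_simps)
qed

lemma sqrt_sum_squares_bounds:
  fixes \<tau> \<delta> :: real
  assumes "\<delta> > 0"
  shows "\<bar>\<tau>\<bar> \<le> sqrt (\<tau>\<^sup>2 + \<delta>\<^sup>2)" "\<delta> \<le> sqrt (\<tau>\<^sup>2 + \<delta>\<^sup>2)" "sqrt (\<tau>\<^sup>2 + \<delta>\<^sup>2) \<le> \<bar>\<tau>\<bar> + \<delta>"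
proof -
  show "\<bar>\<tau>\<bar> \<le> sqrt (\<tau>\<^sup>2 + \<delta>\<^sup>2)" "\<delta> \<le> sqrt (\<tau>\<^sup>2 + \<delta>\<^sup>2)"
    by (simp_all add: real_le_rsqrt)
  have "\<tau>\<^sup>2 + \<delta>\<^sup>2 \<le> (\<bar>\<tau>\<bar> + \<delta>)\<^sup>2"
    using assms by (simp add: power2_eq_square algebra_simps)
  then show "sqrt (\<tau>\<^sup>2 + \<delta>\<^sup>2) \<le> \<bar>\<tau>\<bar> + \<delta>"
    using assms by (simp add: real_sqrt_le_iff' )
qed

lemma smooth_ramp_lower:
  assumes "\<delta> > 0" "\<Lambda> \<ge> 0"
  shows "2 * (\<Lambda> * max \<tau> 0) \<le> smooth_ramp \<Lambda> \<delta> \<tau>"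
proof -
  have "2 * max \<tau> 0 \<le> \<tau> + sqrt (\<tau>\<^sup>2 + \<delta>\<^sup>2)"
    using sqrt_sum_squares_bounds(1)[OF assms(1), of \<tau>] by (auto simp: max_def abs_le_iff)
  then have "\<Lambda> * (2 * max \<tau> 0) \<le> \<Lambda> * (\<tau> + sqrt (\<tau>\<^sup>2 + \<delta>\<^sup>2))"
    using assms(2) by (rule mult_left_mono)
  then show ?thesis unfolding smooth_ramp_def by (simp add: mult.left_commute)
qed

lemma smooth_ramp_upper:
  assumes "\<delta> > 0" "\<Lambda> \<ge> 0"
  shows "smooth_ramp \<Lambda> \<delta> \<tau> \<le> 2 * \<Lambda> * max \<tau> 0 + \<Lambda> * \<delta>"
proof -
  have "\<tau> + sqrt (\<tau>\<^sup>2 + \<delta>\<^sup>2) \<le> 2 * max \<tau> 0 + \<delta>"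
    using sqrt_sum_squares_bounds(3)[OF assms(1), of \<tau>] by linarith
  then have "\<Lambda> * (\<tau> + sqrt (\<tau>\<^sup>2 + \<delta>\<^sup>2)) \<le> \<Lambda> * (2 * max \<tau> 0 + \<delta>)"
    using assms(2) by (rule mult_left_mono)
  then show ?thesis unfolding smooth_ramp_def by (simp add: algebra_simps)
qed

lemma smooth_ramp'_nonneg:
  assumes "\<delta> > 0" "\<Lambda> \<ge> 0"
  shows "smooth_ramp' \<Lambda> \<delta> \<tau> \<ge> 0"
proof -
  define S where "S = sqrt (\<tau>\<^sup>2 + \<delta>\<^sup>2)"
  have "\<bar>\<tau>\<bar> \<le> S" "S > 0"
    using sqrt_sum_squares_bounds[OF assms(1), of \<tau>] assms(1) unfolding S_def by (auto simp: add_nonneg_pos)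
  then have "- 1 \<le> \<tau> / S" by (simp add: le_divide_eq)
  then show ?thesis unfolding smooth_ramp'_def S_def[symmetric] using assms(2) by simp
qed

lemma smooth_ramp''_bound:
  assumes "\<delta> > 0" "\<delta> \<le> 1" "\<Lambda> \<ge> 0" "R \<ge> 0"
  shows "smooth_ramp'' \<Lambda> \<delta> \<tau> * (R - \<tau>) \<le> \<Lambda> * (R + 1) / \<delta>"
proof -
  define S where "S = sqrt (\<tau>\<^sup>2 + \<delta>\<^sup>2)"
  have S: "\<bar>\<tau>\<bar> \<le> S" "\<delta> \<le> S"
    using sqrt_sum_squares_bounds[OF assms(1), of \<tau>] unfolding S_def by auto
  have "S > 0" using S assms by linarith
  have e1: "\<delta>\<^sup>2 / S^3 \<le> 1 / \<delta>"
  proof -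
    have "\<delta>^3 \<le> S^3" using S assms by (intro power_mono) auto
    then show ?thesis using \<open>S > 0\<close> assms by (simp add: divide_simps power3_eq_cube power2_eq_square)
  qed
  have e2: "\<delta>\<^sup>2 * (- \<tau>) / S^3 \<le> 1 / \<delta>"
  proof -
    have "\<delta>\<^sup>2 * (- \<tau>) / S^3 \<le> \<delta>\<^sup>2 * S / S^3"
      using S \<open>S > 0\<close> by (intro divide_right_mono mult_left_mono) auto
    also have "\<dots> = \<delta>\<^sup>2 / S\<^sup>2" using \<open>S > 0\<close> by (simp add: power2_eq_square power3_eq_cube)
    also have "\<dots> \<le> 1" using S assms \<open>S > 0\<close> by (simp add: power_mono)
    also have "1 \<le> 1 / \<delta>" using assms by simp
    finally show ?thesis .
  qed
  have "smooth_ramp'' \<Lambda> \<delta> \<tau> * (R - \<tau>) = \<Lambda> * (R * (\<delta>\<^sup>2 / S^3) + \<delta>\<^sup>2 * (- \<tau>) / S^3)"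
    unfolding smooth_ramp''_def S_def[symmetric]
    by (simp add: algebra_simps diff_divide_distrib[symmetric] add_divide_distrib[symmetric])
  also have "\<dots> \<le> \<Lambda> * (R * (1/\<delta>) + 1/\<delta>)"
    using e1 e2 assms by (intro mult_left_mono add_mono) auto
  also have "\<dots> = \<Lambda> * (R + 1) / \<delta>" by (simp add: algebra_simps add_divide_distrib)
  finally show ?thesis .
qed

section \<open>The barrier argument\<close>

lemma cmod_add_line_squared:
  assumes "cmod v = 1"
  shows "(cmod (x0 + of_real t * v))\<^sup>2 = (cmod x0)\<^sup>2 - (Re (x0 * cnj v))\<^sup>2 + (Re (x0 * cnj v) + t)\<^sup>2"
proof -
  define z where "z = x0 * cnj v"
  have vv: "v * cnj v = 1"
    using assms by (simp add: complex_norm_square[symmetric])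
  have "x0 + of_real t * v = v * (z + of_real t)"
    unfolding z_def using vv by (simp add: algebra_simps)
  then have "cmod (x0 + of_real t * v) = cmod (z + of_real t)"
    using assms by (simp add: norm_mult)
  moreover have "cmod x0 = cmod z"
    using assms unfolding z_def by (simp add: norm_mult)
  ultimately show ?thesis
    unfolding z_def[symmetric] by (simp add: cmod_power2)
qed

lemma second_deriv_test_for_barrier:
  fixes u :: "complex \<Rightarrow> complex"
  assumes twice: "twice_differentiable u" and \<delta>: "\<delta> > 0" and v: "cmod v = 1"
    and max: "\<And>y. (cmod (u y))\<^sup>2 - (c + smooth_ramp \<Lambda> \<delta> (\<rho>\<^sup>2 - (cmod y)\<^sup>2))
                  \<le> (cmod (u x0))\<^sup>2 - (c + smooth_ramp \<Lambda> \<delta> (\<rho>\<^sup>2 - (cmod x0)\<^sup>2))"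
  shows "2 * (cmod (dir_deriv u v x0))\<^sup>2 + 2 * Re (cnj (u x0) * dir_deriv (dir_deriv u v) v x0)
    \<le> smooth_ramp'' \<Lambda> \<delta> (\<rho>\<^sup>2 - (cmod x0)\<^sup>2) * (4 * (Re (x0 * cnj v))\<^sup>2)
      - 2 * smooth_ramp' \<Lambda> \<delta> (\<rho>\<^sup>2 - (cmod x0)\<^sup>2)"
proof -
  define \<beta> where "\<beta> = Re (x0 * cnj v)"
  define \<alpha> where "\<alpha> = \<rho>\<^sup>2 - (cmod x0)\<^sup>2 + \<beta>\<^sup>2"
  have arg: "\<rho>\<^sup>2 - (cmod (x0 + of_real t * v))\<^sup>2 = \<alpha> - (\<beta> + t)\<^sup>2" for t
    using cmod_add_line_squared[OF v, of x0 t] unfolding \<alpha>_def \<beta>_def by simp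
  have "2 * (cmod (dir_deriv u v x0))\<^sup>2 + 2 * Re (cnj (u x0) * dir_deriv (dir_deriv u v) v x0)
    \<le> smooth_ramp'' \<Lambda> \<delta> (\<alpha> - \<beta>\<^sup>2) * (4 * \<beta>\<^sup>2) - 2 * smooth_ramp' \<Lambda> \<delta> (\<alpha> - \<beta>\<^sup>2)"
  proof (rule second_deriv_test_along_line[OF twice
        has_real_derivative_smooth_ramp_parabola[OF \<delta>, where c = c and \<alpha> = \<alpha> and \<beta> = \<beta>]
        has_real_derivative_smooth_ramp'_parabola[OF \<delta>]])
    show "(cmod (u (x0 + of_real t * v)))\<^sup>2 - (c + smooth_ramp \<Lambda> \<delta> (\<alpha> - (\<beta> + t)\<^sup>2))
      \<le> (cmod (u x0))\<^sup>2 - (c + smooth_ramp \<Lambda> \<delta> (\<alpha> - (\<beta> + 0)\<^sup>2))" for t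
      using max[of "x0 + of_real t * v"] arg[of t] arg[of 0] by simp
  qed
  then show ?thesis unfolding \<alpha>_def \<beta>_def by simp
qed

lemma laplacian_bound_at_barrier_max:
  fixes u :: "complex \<Rightarrow> complex"
  assumes twice: "twice_differentiable u" and \<delta>: "0 < \<delta>" "\<delta> \<le> 1" and \<Lambda>: "\<Lambda> \<ge> 0"
    and max: "\<And>y. (cmod (u y))\<^sup>2 - (c + smooth_ramp \<Lambda> \<delta> (\<rho>\<^sup>2 - (cmod y)\<^sup>2))
                  \<le> (cmod (u x0))\<^sup>2 - (c + smooth_ramp \<Lambda> \<delta> (\<rho>\<^sup>2 - (cmod x0)\<^sup>2))"
  shows "2 * Re (cnj (u x0) * laplacian u x0) \<le> 4 * \<Lambda> * (\<rho>\<^sup>2 + 1) / \<delta>"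
proof -
  define \<tau> where "\<tau> = \<rho>\<^sup>2 - (cmod x0)\<^sup>2"
  have "2 * Re (cnj (u x0) * dir_deriv (dir_deriv u v) v x0)
      \<le> smooth_ramp'' \<Lambda> \<delta> \<tau> * (4 * (Re (x0 * cnj v))\<^sup>2) - 2 * smooth_ramp' \<Lambda> \<delta> \<tau>"
    if "cmod v = 1" for v
    using second_deriv_test_for_barrier[OF twice \<delta>(1) that max] zero_le_power2[of "cmod (dir_deriv u v x0)"]
    unfolding \<tau>_def by linarith
  from this[of 1] this[of \<i>]
  have "2 * Re (cnj (u x0) * laplacian u x0)
      \<le> 4 * smooth_ramp'' \<Lambda> \<delta> \<tau> * ((Re x0)\<^sup>2 + (Im x0)\<^sup>2) - 4 * smooth_ramp' \<Lambda> \<delta> \<tau>"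
    unfolding laplacian_def by (simp add: distrib_left algebra_simps)
  also have "\<dots> \<le> 4 * (smooth_ramp'' \<Lambda> \<delta> \<tau> * (\<rho>\<^sup>2 - \<tau>))"
    using smooth_ramp'_nonneg[OF \<delta>(1) \<Lambda>, of \<tau>] unfolding \<tau>_def by (simp add: cmod_power2)
  also have "\<dots> \<le> 4 * \<Lambda> * (\<rho>\<^sup>2 + 1) / \<delta>"
    using smooth_ramp''_bound[OF \<delta> \<Lambda>, of "\<rho>\<^sup>2" \<tau>] by simp
  finally show ?thesis .
qed

lemma continuous_attains_positive_max:
  fixes F :: "'a::{real_normed_vector, heine_borel} \<Rightarrow> real"
  assumes pos: "F x1 > 0" and cont: "continuous_on UNIV F"
    and neg: "eventually (\<lambda>y. F y < 0) at_infinity"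
  obtains x0 where "F x0 > 0" "\<And>y. F y \<le> F x0"
proof -
  obtain b where b: "\<And>y. b \<le> norm y \<Longrightarrow> F y < 0"
    using neg unfolding eventually_at_infinity by auto
  define S where "S = cball (0::'a) \<bar>b\<bar>"
  have out: "F y < 0" if "y \<notin> S" for y
    using b that unfolding S_def by (simp add: dist_norm)
  then have "x1 \<in> S" using pos by fastforce
  moreover have "compact S" unfolding S_def by simp
  ultimately obtain x0 where "x0 \<in> S" "\<And>y. y \<in> S \<Longrightarrow> F y \<le> F x0"
    using continuous_attains_sup[of S F] cont continuous_on_subset by blast
  moreover from this have "F x0 > 0" using \<open>x1 \<in> S\<close> pos by fastforce
  ultimately show ?thesis using that out by (metis less_le_not_le order.trans)
qed

lemma re_cnj_laplacian_eq:
  fixes z L g :: complex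
  assumes "of_real (\<epsilon>\<^sup>2) * L + of_real m * z - of_real ((cmod z)\<^sup>2) * z + of_real k * g = 0"
  shows "\<epsilon>\<^sup>2 * Re (cnj z * L) = (cmod z)^4 - m * (cmod z)\<^sup>2 - k * Re (cnj z * g)"
proof -
  define w where "w = (cmod z)\<^sup>2"
  have zz: "cnj z * z = of_real w"
    unfolding w_def by (metis complex_norm_square mult.commute of_real_power)
  have L: "of_real (\<epsilon>\<^sup>2) * L = - (of_real m * z) + of_real w * z - of_real k * g"
    using assms unfolding w_def by (simp add: algebra_simps)
  have "\<epsilon>\<^sup>2 * Re (cnj z * L) = Re (cnj z * (of_real (\<epsilon>\<^sup>2) * L))"
    by (simp add: algebra_simps)
  also have "cnj z * (of_real (\<epsilon>\<^sup>2) * L)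
      = - (of_real m * (cnj z * z)) + of_real w * (cnj z * z) - of_real k * (cnj z * g)"
    unfolding L by (simp add: ring_distribs mult.left_commute)
  also have "Re \<dots> = w * w - m * w - k * Re (cnj z * g)"
    unfolding zz by simp
  finally show ?thesis unfolding w_def by (simp add: power4_eq_xxxx power2_eq_square)
qed

lemma quartic_balance_impossible:
  fixes e n K P Q m Y r :: real
  assumes e: "0 < e" and K: "1 \<le> K" "4 * P \<le> K" "4 * Q \<le> K" "K * e < n"
    and Y: "Y = n^4 - m * n\<^sup>2 - r" "Y \<le> e^4 * Q"
    and m: "2 * m < n\<^sup>2" and r: "r \<le> e^3 * n * P"
  shows False
proof -
  have "0 < K * e" using e K(1) by simp
  then have n: "0 < n" using K(4) by linarith
  have "K \<le> K^3" "K \<le> K^4"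
    using K(1) power_increasing[of 1 _ K] by simp_all
  have "e^3 * n * (4 * P) \<le> e^3 * n * K^3"
    using e K(2) n \<open>K \<le> K^3\<close> by (intro mult_left_mono) auto
  also have "\<dots> = (K * e)^3 * n" by (simp add: power_mult_distrib)
  also have "\<dots> \<le> n^3 * n"
    using \<open>0 < K * e\<close> K(4) n by (intro mult_right_mono power_mono) auto
  also have "\<dots> = n^4" by (simp add: power_Suc2[symmetric] del: power_Suc)
  finally have "e^3 * n * (4 * P) \<le> n^4" .
  moreover have "e^4 * (4 * Q) \<le> e^4 * K^4"
    using e K(3) \<open>K \<le> K^4\<close> by (intro mult_left_mono) auto
  moreover have "e^4 * K^4 < n^4"
    using power_strict_mono[OF K(4), of 4] \<open>0 < K * e\<close> by (simp add: power_mult_distrib mult.commute)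
  moreover have "m * n\<^sup>2 \<le> n^4 / 2"
  proof -
    have "(2 * m) * n\<^sup>2 \<le> n\<^sup>2 * n\<^sup>2" using m by (intro mult_right_mono) auto
    then show ?thesis by (simp add: power4_eq_xxxx power2_eq_square)
  qed
  ultimately show False using Y r by linarith
qed

definition decaying_solution ::
    "(complex \<Rightarrow> real) \<Rightarrow> (complex \<Rightarrow> complex) \<Rightarrow> real \<Rightarrow> real \<Rightarrow> (complex \<Rightarrow> complex) \<Rightarrow> bool" where
  "decaying_solution \<mu> f \<epsilon> a u \<longleftrightarrow> twice_differentiable u \<and>
     (\<forall>x. complex_of_real (\<epsilon>\<^sup>2) * laplacian u x + complex_of_real (\<mu> x) * u x
          - complex_of_real ((cmod (u x))\<^sup>2) * u x + complex_of_real (\<epsilon> * a) * f x = 0) \<and>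
     (u \<longlongrightarrow> 0) at_infinity"

lemma smooth_ramp_nonneg:
  assumes "\<delta> > 0" "\<Lambda> \<ge> 0"
  shows "smooth_ramp \<Lambda> \<delta> \<tau> \<ge> 0"
proof -
  have "0 \<le> 2 * (\<Lambda> * max \<tau> 0)" using assms(2) by simp
  with smooth_ramp_lower[OF assms, of \<tau>] show ?thesis by linarith
qed

lemma barrier_excess_attains_max:
  fixes u :: "complex \<Rightarrow> complex"
  assumes twice: "twice_differentiable u" and lim: "(u \<longlongrightarrow> 0) at_infinity"
    and c: "0 < c" and \<delta>: "0 < \<delta>" and \<Lambda>: "0 \<le> \<Lambda>"
    and above: "c + smooth_ramp \<Lambda> \<delta> (\<rho>\<^sup>2 - (cmod x)\<^sup>2) < (cmod (u x))\<^sup>2"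
  obtains x0 where "c + smooth_ramp \<Lambda> \<delta> (\<rho>\<^sup>2 - (cmod x0)\<^sup>2) < (cmod (u x0))\<^sup>2"
    "\<And>y. (cmod (u y))\<^sup>2 - (c + smooth_ramp \<Lambda> \<delta> (\<rho>\<^sup>2 - (cmod y)\<^sup>2))
       \<le> (cmod (u x0))\<^sup>2 - (c + smooth_ramp \<Lambda> \<delta> (\<rho>\<^sup>2 - (cmod x0)\<^sup>2))"
proof -
  define F where "F y = (cmod (u y))\<^sup>2 - (c + smooth_ramp \<Lambda> \<delta> (\<rho>\<^sup>2 - (cmod y)\<^sup>2))" for y
  have "F x > 0" using above unfolding F_def by simp
  moreover have "continuous_on UNIV F"
  proof -
    have "continuous_on UNIV u"
      using twice unfolding twice_differentiable_def
      by (simp add: differentiable_imp_continuous_within continuous_at_imp_continuous_on)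
    then show ?thesis unfolding F_def smooth_ramp_def by (intro continuous_intros)
  qed
  moreover have "eventually (\<lambda>y. F y < 0) at_infinity"
  proof -
    have "eventually (\<lambda>y. dist (u y) 0 < sqrt c) at_infinity"
      using lim c unfolding tendsto_iff by simp
    then show ?thesis
    proof (rule eventually_mono)
      fix y assume "dist (u y) 0 < sqrt c"
      then have "(cmod (u y))\<^sup>2 < c"
        using power_strict_mono[of "cmod (u y)" "sqrt c" 2] c by simp
      then show "F y < 0"
        using smooth_ramp_nonneg[OF \<delta> \<Lambda>, of "\<rho>\<^sup>2 - (cmod y)\<^sup>2"] unfolding F_def by linarith
    qed
  qed
  ultimately obtain x0 where x0: "F x0 > 0" "\<And>y. F y \<le> F x0"
    by (rule continuous_attains_positive_max) blast+
  show ?thesis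
  proof (rule that)
    show "c + smooth_ramp \<Lambda> \<delta> (\<rho>\<^sup>2 - (cmod x0)\<^sup>2) < (cmod (u x0))\<^sup>2"
      using x0(1) unfolding F_def by simp
    show "(cmod (u y))\<^sup>2 - (c + smooth_ramp \<Lambda> \<delta> (\<rho>\<^sup>2 - (cmod y)\<^sup>2))
       \<le> (cmod (u x0))\<^sup>2 - (c + smooth_ramp \<Lambda> \<delta> (\<rho>\<^sup>2 - (cmod x0)\<^sup>2))" for y
      using x0(2)[of y] unfolding F_def .
  qed
qed

lemma no_maximal_barrier_excess:
  fixes u f :: "complex \<Rightarrow> complex" and \<mu> :: "complex \<Rightarrow> real"
  assumes sol: "decaying_solution \<mu> f (e^3) a u"
    and e: "0 < e" "e \<le> 1" and a: "\<bar>a\<bar> \<le> A" and f: "\<And>x. cmod (f x) \<le> M"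
    and \<Lambda>: "\<Lambda> \<ge> 0" and \<mu>: "\<And>x. \<mu> x \<le> \<Lambda> * max (\<rho>\<^sup>2 - (cmod x)\<^sup>2) 0"
    and K: "1 \<le> K" "4 * A * M \<le> K" "8 * \<Lambda> * (\<rho>\<^sup>2 + 1) \<le> K"
    and above: "(K * e)\<^sup>2 + smooth_ramp \<Lambda> (e\<^sup>2) (\<rho>\<^sup>2 - (cmod x0)\<^sup>2) < (cmod (u x0))\<^sup>2"
    and max: "\<And>y. (cmod (u y))\<^sup>2 - ((K * e)\<^sup>2 + smooth_ramp \<Lambda> (e\<^sup>2) (\<rho>\<^sup>2 - (cmod y)\<^sup>2))
       \<le> (cmod (u x0))\<^sup>2 - ((K * e)\<^sup>2 + smooth_ramp \<Lambda> (e\<^sup>2) (\<rho>\<^sup>2 - (cmod x0)\<^sup>2))"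
  shows False
proof -
  have \<delta>: "0 < e\<^sup>2" "e\<^sup>2 \<le> 1" using e by (auto simp: power_le_one)
  define n where "n = cmod (u x0)"
  define \<tau> where "\<tau> = \<rho>\<^sup>2 - (cmod x0)\<^sup>2"
  define X where "X = Re (cnj (u x0) * laplacian u x0)"
  have twice: "twice_differentiable u"
    and eq: "complex_of_real ((e^3)\<^sup>2) * laplacian u x0 + complex_of_real (\<mu> x0) * u x0
          - complex_of_real ((cmod (u x0))\<^sup>2) * u x0 + complex_of_real (e^3 * a) * f x0 = 0"
    using sol unfolding decaying_solution_def by auto
  have "e\<^sup>2 * (2 * X) \<le> 4 * \<Lambda> * (\<rho>\<^sup>2 + 1)"
    using laplacian_bound_at_barrier_max[OF twice \<delta> \<Lambda> max] \<delta>(1)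
    unfolding X_def by (simp add: pos_le_divide_eq mult.commute)
  then have "e^4 * (e\<^sup>2 * X) \<le> e^4 * (2 * \<Lambda> * (\<rho>\<^sup>2 + 1))"
    by (intro mult_left_mono) (simp_all add: algebra_simps)
  then have lap: "(e^3)\<^sup>2 * X \<le> e^4 * (2 * \<Lambda> * (\<rho>\<^sup>2 + 1))"
    by (simp add: power2_eq_square power3_eq_cube power4_eq_xxxx algebra_simps)
  have identity: "(e^3)\<^sup>2 * X = n^4 - \<mu> x0 * n\<^sup>2 - e^3 * a * Re (cnj (u x0) * f x0)"
    unfolding n_def X_def by (rule re_cnj_laplacian_eq[OF eq])
  have above': "(K * e)\<^sup>2 + smooth_ramp \<Lambda> (e\<^sup>2) \<tau> < n\<^sup>2"
    using above unfolding n_def \<tau>_def .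
  have ramp: "0 \<le> smooth_ramp \<Lambda> (e\<^sup>2) \<tau>" "2 * (\<Lambda> * max \<tau> 0) \<le> smooth_ramp \<Lambda> (e\<^sup>2) \<tau>"
    using smooth_ramp_nonneg[OF \<delta>(1) \<Lambda>] smooth_ramp_lower[OF \<delta>(1) \<Lambda>] by auto
  have "K * e < n"
  proof (rule power_less_imp_less_base)
    show "(K * e)\<^sup>2 < n\<^sup>2" using above' ramp(1) by linarith
  qed (simp add: n_def)
  moreover have "2 * \<mu> x0 < n\<^sup>2"
    using \<mu>[of x0] above' ramp zero_le_power2[of "K * e"] unfolding \<tau>_def by linarith
  moreover have "e^3 * a * Re (cnj (u x0) * f x0) \<le> e^3 * n * (A * M)"
  proof -
    have "\<bar>Re (cnj (u x0) * f x0)\<bar> \<le> n * cmod (f x0)"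
      using abs_Re_le_cmod[of "cnj (u x0) * f x0"] unfolding n_def by (simp add: norm_mult)
    also have "\<dots> \<le> n * M" using f[of x0] unfolding n_def by (intro mult_left_mono) simp_all
    finally have "\<bar>a * Re (cnj (u x0) * f x0)\<bar> \<le> A * (n * M)"
      unfolding abs_mult using a by (intro mult_mono) auto
    then have "e^3 * (a * Re (cnj (u x0) * f x0)) \<le> e^3 * (n * (A * M))"
      using e by (intro mult_left_mono) (auto simp: mult.left_commute dest: abs_le_D1)
    then show ?thesis by (simp only: mult.assoc)
  qed
  moreover have "4 * (A * M) \<le> K" "4 * (2 * \<Lambda> * (\<rho>\<^sup>2 + 1)) \<le> K"
    using K(2,3) by (simp_all add: mult.assoc)
  ultimately show False
    using quartic_balance_impossible[OF e(1) K(1) _ _ _ identity lap] by blast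
qed

lemma decaying_solution_below_barrier:
  fixes u f :: "complex \<Rightarrow> complex" and \<mu> :: "complex \<Rightarrow> real"
  assumes sol: "decaying_solution \<mu> f (e^3) a u"
    and e: "0 < e" "e \<le> 1" and a: "\<bar>a\<bar> \<le> A" and f: "\<And>x. cmod (f x) \<le> M"
    and \<Lambda>: "\<Lambda> \<ge> 0" and \<mu>: "\<And>x. \<mu> x \<le> \<Lambda> * max (\<rho>\<^sup>2 - (cmod x)\<^sup>2) 0"
    and K: "1 \<le> K" "4 * A * M \<le> K" "8 * \<Lambda> * (\<rho>\<^sup>2 + 1) \<le> K"
  shows "(cmod (u x))\<^sup>2 \<le> (K * e)\<^sup>2 + smooth_ramp \<Lambda> (e\<^sup>2) (\<rho>\<^sup>2 - (cmod x)\<^sup>2)"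
proof (rule ccontr)
  assume "\<not> ?thesis"
  moreover have "twice_differentiable u" "(u \<longlongrightarrow> 0) at_infinity"
    using sol unfolding decaying_solution_def by auto
  moreover have "0 < (K * e)\<^sup>2" "0 < e\<^sup>2" using K(1) e(1) by simp_all
  ultimately obtain x0 where "(K * e)\<^sup>2 + smooth_ramp \<Lambda> (e\<^sup>2) (\<rho>\<^sup>2 - (cmod x0)\<^sup>2) < (cmod (u x0))\<^sup>2"
    "\<And>y. (cmod (u y))\<^sup>2 - ((K * e)\<^sup>2 + smooth_ramp \<Lambda> (e\<^sup>2) (\<rho>\<^sup>2 - (cmod y)\<^sup>2))
       \<le> (cmod (u x0))\<^sup>2 - ((K * e)\<^sup>2 + smooth_ramp \<Lambda> (e\<^sup>2) (\<rho>\<^sup>2 - (cmod x0)\<^sup>2))"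
    using barrier_excess_attains_max[OF _ _ _ _ \<Lambda>] by (metis not_le)
  then show False by (rule no_maximal_barrier_excess[OF sol e a f \<Lambda> \<mu> K])
qed

section \<open>Radial potentials\<close>

lemma DERIV_neg_linear_bounds_left:
  fixes g :: "real \<Rightarrow> real"
  assumes g': "(g has_real_derivative d) (at \<rho>)" and d: "d < 0" and g\<rho>: "g \<rho> = 0"
  obtains \<eta> where "\<eta> > 0"
    "\<And>r. \<rho> - \<eta> < r \<Longrightarrow> r \<le> \<rho> \<Longrightarrow> - d / 2 * (\<rho> - r) \<le> g r \<and> g r \<le> - 3 * d / 2 * (\<rho> - r)"
proof -
  have "((\<lambda>y. (g y - g \<rho>) / (y - \<rho>)) \<longlongrightarrow> d) (at \<rho>)"
    using g' unfolding has_field_derivative_iff .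
  then have "eventually (\<lambda>y. dist ((g y - g \<rho>) / (y - \<rho>)) d < - d / 2) (at \<rho>)"
    using d by (intro tendstoD) auto
  then obtain \<eta> where \<eta>: "\<eta> > 0"
    and close: "\<And>y. y \<noteq> \<rho> \<Longrightarrow> dist y \<rho> < \<eta> \<Longrightarrow> dist (g y / (y - \<rho>)) d < - d / 2"
    unfolding eventually_at g\<rho> by auto
  have "- d / 2 * (\<rho> - r) \<le> g r \<and> g r \<le> - 3 * d / 2 * (\<rho> - r)" if r: "\<rho> - \<eta> < r" "r \<le> \<rho>" for r
  proof (cases "r = \<rho>")
    case False
    define Q where "Q = g r / (r - \<rho>)"
    have "dist Q d < - d / 2"
      using close[of r] False r unfolding Q_def by (auto simp: dist_real_def)
    then have "3 * d / 2 < Q" "Q < d / 2"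
      by (auto simp: dist_real_def abs_less_iff)
    moreover have "g r = - Q * (\<rho> - r)"
      using False unfolding Q_def by (simp add: field_simps)
    ultimately show ?thesis
      using r False by (auto intro!: mult_right_mono)
  qed (simp add: g\<rho>)
  with \<eta> that show ?thesis by blast
qed

lemma deriv_neg_imp_strict_decreasing:
  fixes g :: "real \<Rightarrow> real"
  assumes diff: "\<And>x. g differentiable (at x)" and decr: "\<And>t. t > 0 \<Longrightarrow> deriv g t < 0"
    and "0 \<le> a" "a < b"
  shows "g b < g a"
proof -
  have D: "(g has_real_derivative deriv g x) (at x)" for x
    using diff DERIV_deriv_iff_real_differentiable by blast
  then have cont: "continuous_on {a..b} g"
    using DERIV_isCont continuous_at_imp_continuous_on by blast
  show ?thesis
  proof (rule DERIV_neg_imp_decreasing_open[OF \<open>a < b\<close>])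
    show "\<exists>y. (g has_real_derivative y) (at x) \<and> y < 0" if "a < x" for x
    proof (intro exI conjI)
      show "(g has_real_derivative deriv g x) (at x)" by (rule D)
      show "deriv g x < 0" using that \<open>0 \<le> a\<close> by (intro decr) simp
    qed
  qed (fact cont)
qed

lemma decreasing_profile_linear_bounds:
  fixes \<mu>r :: "real \<Rightarrow> real"
  assumes diff: "\<And>x. \<mu>r differentiable (at x)" and decr: "\<And>t. t > 0 \<Longrightarrow> deriv \<mu>r t < 0"
    and \<rho>: "\<rho> > 0" "\<mu>r \<rho> = 0" and bdd: "\<And>r. r \<ge> 0 \<Longrightarrow> \<mu>r r \<le> M"
  obtains c L where "c > 0" "L > 0"
    "\<And>r. 0 \<le> r \<Longrightarrow> r \<le> \<rho> \<Longrightarrow> c * (\<rho> - r) \<le> \<mu>r r \<and> \<mu>r r \<le> L * (\<rho> - r)"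
proof -
  define d where "d = deriv \<mu>r \<rho>"
  have "d < 0" using decr \<rho> unfolding d_def by simp
  moreover have "(\<mu>r has_real_derivative d) (at \<rho>)"
    using diff DERIV_deriv_iff_real_differentiable unfolding d_def by blast
  ultimately obtain \<eta> where \<eta>: "\<eta> > 0" and near:
    "\<And>r. \<rho> - \<eta> < r \<Longrightarrow> r \<le> \<rho> \<Longrightarrow> - d / 2 * (\<rho> - r) \<le> \<mu>r r \<and> \<mu>r r \<le> - 3 * d / 2 * (\<rho> - r)"
    using DERIV_neg_linear_bounds_left \<rho>(2) by metis
  define \<eta>1 where "\<eta>1 = min \<eta> \<rho>"
  have \<eta>1: "0 < \<eta>1" "\<eta>1 \<le> \<rho>" "\<eta>1 \<le> \<eta>" using \<eta> \<rho> unfolding \<eta>1_def by auto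
  define m where "m = \<mu>r (\<rho> - \<eta>1)"
  have "m > 0"
    using deriv_neg_imp_strict_decreasing[OF diff decr, of "\<rho> - \<eta>1" \<rho>] \<eta>1 \<rho> unfolding m_def by simp
  define c where "c = min (- d / 2) (m / \<rho>)"
  define L where "L = max (- 3 * d / 2) (max M 0 / \<eta>1)"
  have "c > 0" "L > 0" using \<open>d < 0\<close> \<open>m > 0\<close> \<rho> unfolding c_def L_def by auto
  moreover have "c * (\<rho> - r) \<le> \<mu>r r \<and> \<mu>r r \<le> L * (\<rho> - r)" if r: "0 \<le> r" "r \<le> \<rho>" for r
  proof (cases "r > \<rho> - \<eta>1")
    case True
    then have "- d / 2 * (\<rho> - r) \<le> \<mu>r r \<and> \<mu>r r \<le> - 3 * d / 2 * (\<rho> - r)"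
      using near r \<eta>1 by auto
    moreover have "c \<le> - d / 2" "- 3 * d / 2 \<le> L"
      unfolding c_def L_def by auto
    then have "c * (\<rho> - r) \<le> - d / 2 * (\<rho> - r)" "- 3 * d / 2 * (\<rho> - r) \<le> L * (\<rho> - r)"
      using r by (intro mult_right_mono; simp)+
    ultimately show ?thesis by linarith
  next
    case False
    have "c * (\<rho> - r) \<le> m / \<rho> * \<rho>"
      using r \<open>c > 0\<close> \<rho> unfolding c_def by (intro mult_mono) auto
    also have "\<dots> = m" using \<rho> by simp
    also have "\<dots> \<le> \<mu>r r"
      using deriv_neg_imp_strict_decreasing[OF diff decr, of r "\<rho> - \<eta>1"] False r
      unfolding m_def by (cases "r = \<rho> - \<eta>1") auto
    finally have low: "c * (\<rho> - r) \<le> \<mu>r r" .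
    have "\<mu>r r \<le> max M 0" using bdd[OF r(1)] by simp
    also have "\<dots> = max M 0 / \<eta>1 * \<eta>1" using \<eta>1 by simp
    also have "\<dots> \<le> max M 0 / \<eta>1 * (\<rho> - r)" using False \<eta>1 by (intro mult_left_mono) auto
    also have "\<dots> \<le> L * (\<rho> - r)"
      using r unfolding L_def by (intro mult_right_mono) auto
    finally show ?thesis using low by blast
  qed
  ultimately show ?thesis using that by blast
qed

lemma decreasing_profile_comparable:
  fixes \<mu>r :: "real \<Rightarrow> real"
  assumes diff: "\<And>x. \<mu>r differentiable (at x)" and decr: "\<And>t. t > 0 \<Longrightarrow> deriv \<mu>r t < 0"
    and \<rho>: "\<rho> > 0" "\<mu>r \<rho> = 0" and bdd: "\<And>r. r \<ge> 0 \<Longrightarrow> \<mu>r r \<le> M"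
  obtains \<Lambda> C where "\<Lambda> > 0" "C > 0"
    "\<And>r. r \<ge> 0 \<Longrightarrow> max (\<mu>r r) 0 \<le> \<Lambda> * max (\<rho>\<^sup>2 - r\<^sup>2) 0"
    "\<And>r. r \<ge> 0 \<Longrightarrow> max (\<rho>\<^sup>2 - r\<^sup>2) 0 \<le> C * max (\<mu>r r) 0"
proof -
  obtain c L where cL: "c > 0" "L > 0"
    and lin: "\<And>r. 0 \<le> r \<Longrightarrow> r \<le> \<rho> \<Longrightarrow> c * (\<rho> - r) \<le> \<mu>r r \<and> \<mu>r r \<le> L * (\<rho> - r)"
    using decreasing_profile_linear_bounds[OF diff decr \<rho> bdd] by blast
  have "max (\<mu>r r) 0 \<le> L / \<rho> * max (\<rho>\<^sup>2 - r\<^sup>2) 0 \<and> max (\<rho>\<^sup>2 - r\<^sup>2) 0 \<le> 2 * \<rho> / c * max (\<mu>r r) 0"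
    if r: "r \<ge> 0" for r
  proof (cases "r \<le> \<rho>")
    case True
    have sq: "\<rho>\<^sup>2 - r\<^sup>2 = (\<rho> - r) * (\<rho> + r)" by (simp add: power2_eq_square algebra_simps)
    have "\<mu>r r \<le> L / \<rho> * ((\<rho> - r) * \<rho>)" using lin[OF r True] \<rho> by simp
    also have "\<dots> \<le> L / \<rho> * (\<rho>\<^sup>2 - r\<^sup>2)"
      unfolding sq using r True \<rho> cL by (intro mult_left_mono) auto
    finally have up: "\<mu>r r \<le> L / \<rho> * (\<rho>\<^sup>2 - r\<^sup>2)" .
    have "\<rho>\<^sup>2 - r\<^sup>2 \<le> (\<rho> - r) * (2 * \<rho>)"
      unfolding sq using r True by (intro mult_left_mono) auto
    also have "\<dots> = 2 * \<rho> / c * (c * (\<rho> - r))"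
      using cL by simp
    also have "\<dots> \<le> 2 * \<rho> / c * \<mu>r r"
      using lin[OF r True] cL \<rho> by (intro mult_left_mono) auto
    finally have low: "\<rho>\<^sup>2 - r\<^sup>2 \<le> 2 * \<rho> / c * \<mu>r r" .
    have "0 \<le> \<rho>\<^sup>2 - r\<^sup>2" using r True by (simp add: power_mono)
    moreover have "0 \<le> \<mu>r r"
      using lin[OF r True] mult_nonneg_nonneg[of c "\<rho> - r"] cL True by linarith
    ultimately show ?thesis using up low by (simp add: max_absorb1)
  next
    case False
    then have "\<mu>r r < 0" "\<rho>\<^sup>2 - r\<^sup>2 < 0"
      using deriv_neg_imp_strict_decreasing[OF diff decr, of \<rho> r] \<rho> by (auto simp: power_strict_mono)
    then show ?thesis by simp
  qed
  moreover have "L / \<rho> > 0" "2 * \<rho> / c > 0" using cL \<rho> by auto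
  ultimately show ?thesis using that by blast
qed

lemma radial_potential_comparable:
  fixes \<mu> :: "complex \<Rightarrow> real" and \<mu>r :: "real \<Rightarrow> real"
  assumes rad: "\<And>x. \<mu> x = \<mu>r (cmod x)" and bdd: "bounded (range \<mu>)"
    and diff: "\<And>t. \<mu>r differentiable (at t)" and decr: "\<And>t. t > 0 \<Longrightarrow> deriv \<mu>r t < 0"
    and \<rho>: "\<rho> > 0" "\<mu>r \<rho> = 0"
  obtains \<Lambda> C where "\<Lambda> > 0" "C > 0"
    "\<And>x. max (\<mu> x) 0 \<le> \<Lambda> * max (\<rho>\<^sup>2 - (cmod x)\<^sup>2) 0"
    "\<And>x. max (\<rho>\<^sup>2 - (cmod x)\<^sup>2) 0 \<le> C * max (\<mu> x) 0"
proof -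
  obtain B where B: "\<And>x. norm (\<mu> x) \<le> B"
    using bdd unfolding bounded_iff by auto
  have "\<mu>r r \<le> B" if "r \<ge> 0" for r
    using rad[of "of_real r"] B[of "of_real r"] that by (simp add: abs_le_iff)
  then obtain \<Lambda> C where "\<Lambda> > 0" "C > 0"
    and le: "\<And>r. r \<ge> 0 \<Longrightarrow> max (\<mu>r r) 0 \<le> \<Lambda> * max (\<rho>\<^sup>2 - r\<^sup>2) 0"
    and ge: "\<And>r. r \<ge> 0 \<Longrightarrow> max (\<rho>\<^sup>2 - r\<^sup>2) 0 \<le> C * max (\<mu>r r) 0"
    using decreasing_profile_comparable[OF diff decr \<rho>] by metis
  show ?thesis
  proof (rule that)
    show "max (\<mu> x) 0 \<le> \<Lambda> * max (\<rho>\<^sup>2 - (cmod x)\<^sup>2) 0" for x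
      using le[of "cmod x"] unfolding rad by simp
    show "max (\<rho>\<^sup>2 - (cmod x)\<^sup>2) 0 \<le> C * max (\<mu> x) 0" for x
      using ge[of "cmod x"] unfolding rad by simp
  qed fact+
qed

section \<open>Uniform bounds\<close>

lemma powr_one_third:
  fixes \<epsilon> :: real
  assumes "0 < \<epsilon>" "\<epsilon> < 1"
  shows "0 < \<epsilon> powr (1/3)" "\<epsilon> powr (1/3) \<le> 1" "(\<epsilon> powr (1/3)) ^ 3 = \<epsilon>"
    "\<epsilon> powr (2/3) = (\<epsilon> powr (1/3))\<^sup>2" "\<epsilon> powr (-1/3) * \<epsilon> powr (1/3) = 1"
proof -
  show "0 < \<epsilon> powr (1/3)" using assms by simp
  show "\<epsilon> powr (1/3) \<le> 1" using assms by (intro powr_le1) auto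
  have "(\<epsilon> powr (1/3)) ^ 3 = (\<epsilon> powr (1/3)) powr (real 3)"
    using assms by (subst powr_realpow) auto
  also have "\<dots> = \<epsilon>" using assms by (simp add: powr_powr)
  finally show "(\<epsilon> powr (1/3)) ^ 3 = \<epsilon>" .
  have "\<epsilon> powr (2/3) = \<epsilon> powr (1/3 + 1/3)" by simp
  then show "\<epsilon> powr (2/3) = (\<epsilon> powr (1/3))\<^sup>2" by (simp only: powr_add power2_eq_square)
  have "\<epsilon> powr (-1/3) = inverse (\<epsilon> powr (1/3))" by (simp add: powr_minus[symmetric])
  then show "\<epsilon> powr (-1/3) * \<epsilon> powr (1/3) = 1" using assms by simp
qed

lemma decaying_solution_pointwise_bound:
  fixes \<mu> :: "complex \<Rightarrow> real" and f :: "complex \<Rightarrow> complex"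
  assumes f: "\<And>x. cmod (f x) \<le> M" and A: "A \<ge> 0" and \<Lambda>: "\<Lambda> \<ge> 0" and C: "C \<ge> 0"
    and \<mu>_le: "\<And>x. max (\<mu> x) 0 \<le> \<Lambda> * max (\<rho>\<^sup>2 - (cmod x)\<^sup>2) 0"
    and \<mu>_ge: "\<And>x. max (\<rho>\<^sup>2 - (cmod x)\<^sup>2) 0 \<le> C * max (\<mu> x) 0"
  obtains K where "K > 0" "\<forall>\<epsilon> a u. 0 < \<epsilon> \<and> \<epsilon> < 1 \<and> \<bar>a\<bar> \<le> A \<and> decaying_solution \<mu> f \<epsilon> a u
    \<longrightarrow> (\<forall>x. cmod (u x) \<le> K * (sqrt (max (\<mu> x) 0) + \<epsilon> powr (1/3)))"
proof -
  have "M \<ge> 0" using f[of 0] norm_ge_zero order_trans by blast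
  define K0 where "K0 = 1 + 4 * A * M + 8 * \<Lambda> * (\<rho>\<^sup>2 + 1)"
  have K0: "1 \<le> K0" "4 * A * M \<le> K0" "8 * \<Lambda> * (\<rho>\<^sup>2 + 1) \<le> K0"
    using A \<Lambda> \<open>M \<ge> 0\<close> unfolding K0_def by simp_all
  define K where "K = sqrt (K0\<^sup>2 + \<Lambda>) + sqrt (2 * \<Lambda> * C)"
  have "sqrt (K0\<^sup>2 + \<Lambda>) \<ge> 1"
    using one_le_power[OF K0(1), of 2] \<Lambda> by (intro real_le_rsqrt) simp
  moreover have "sqrt (2 * \<Lambda> * C) \<ge> 0" using \<Lambda> C by simp
  ultimately have "K > 0" unfolding K_def by linarith
  moreover have "cmod (u x) \<le> K * (sqrt (max (\<mu> x) 0) + \<epsilon> powr (1/3))"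
    if \<epsilon>: "0 < \<epsilon>" "\<epsilon> < 1" and a: "\<bar>a\<bar> \<le> A" and sol: "decaying_solution \<mu> f \<epsilon> a u" for \<epsilon> a u x
  proof -
    define e where "e = \<epsilon> powr (1/3)"
    define m where "m = max (\<mu> x) 0"
    have e: "0 < e" "e \<le> 1" "e ^ 3 = \<epsilon>" using powr_one_third[OF \<epsilon>] unfolding e_def by auto
    have "m \<ge> 0" unfolding m_def by simp
    have "(cmod (u x))\<^sup>2 \<le> (K0 * e)\<^sup>2 + smooth_ramp \<Lambda> (e\<^sup>2) (\<rho>\<^sup>2 - (cmod x)\<^sup>2)"
    proof (rule decaying_solution_below_barrier[OF _ e(1,2) a f \<Lambda> _ K0])
      show "decaying_solution \<mu> f (e ^ 3) a u" using sol e(3) by simp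
      show "\<mu> y \<le> \<Lambda> * max (\<rho>\<^sup>2 - (cmod y)\<^sup>2) 0" for y
        using \<mu>_le[of y] by linarith
    qed
    also have "\<dots> \<le> (K0 * e)\<^sup>2 + (2 * \<Lambda> * max (\<rho>\<^sup>2 - (cmod x)\<^sup>2) 0 + \<Lambda> * e\<^sup>2)"
      using smooth_ramp_upper[of "e\<^sup>2" \<Lambda>] e \<Lambda> by simp
    also have "\<dots> \<le> (K0 * e)\<^sup>2 + (2 * \<Lambda> * (C * m) + \<Lambda> * e\<^sup>2)"
      using \<mu>_ge[of x] \<Lambda> unfolding m_def by (simp add: mult_left_mono)
    also have "\<dots> = (K0\<^sup>2 + \<Lambda>) * e\<^sup>2 + (2 * \<Lambda> * C) * m"
      by (simp add: power_mult_distrib algebra_simps)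
    finally have "cmod (u x) \<le> sqrt ((K0\<^sup>2 + \<Lambda>) * e\<^sup>2 + (2 * \<Lambda> * C) * m)"
      by (simp add: real_le_rsqrt)
    also have "\<dots> \<le> sqrt ((K0\<^sup>2 + \<Lambda>) * e\<^sup>2) + sqrt ((2 * \<Lambda> * C) * m)"
      using \<Lambda> C \<open>m \<ge> 0\<close> by (intro sqrt_add_le_add_sqrt) auto
    also have "\<dots> = sqrt (K0\<^sup>2 + \<Lambda>) * e + sqrt (2 * \<Lambda> * C) * sqrt m"
      using e by (simp add: real_sqrt_mult)
    also have "\<dots> \<le> K * e + K * sqrt m"
      unfolding K_def using e \<open>m \<ge> 0\<close> \<Lambda> C by (intro add_mono mult_right_mono) auto
    finally show ?thesis unfolding m_def e_def by (simp add: algebra_simps)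
  qed
  ultimately show ?thesis using that by blast
qed

lemma rescaled_point_distance:
  fixes \<rho> \<delta> s0 s1 s2 \<theta> :: real
  assumes "0 < \<rho>" "0 \<le> \<delta>" "s0 \<le> s1"
  shows "\<rho>\<^sup>2 - (cmod (of_real \<rho> * cis \<theta> + of_real \<delta> * (of_real s1 * cis \<theta> + of_real s2 * (\<i> * cis \<theta>))))\<^sup>2
    \<le> 2 * \<rho> * \<delta> * max (- s0) 0"
proof -
  have "of_real \<rho> * cis \<theta> + of_real \<delta> * (of_real s1 * cis \<theta> + of_real s2 * (\<i> * cis \<theta>))
      = cis \<theta> * Complex (\<rho> + \<delta> * s1) (\<delta> * s2)"
    by (simp add: complex_eq_iff algebra_simps)
  then have "(cmod (of_real \<rho> * cis \<theta> + of_real \<delta> * (of_real s1 * cis \<theta> + of_real s2 * (\<i> * cis \<theta>))))\<^sup>2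
      = (\<rho> + \<delta> * s1)\<^sup>2 + (\<delta> * s2)\<^sup>2"
    by (simp add: norm_mult cmod_power2)
  then have "\<rho>\<^sup>2 - (cmod (of_real \<rho> * cis \<theta> + of_real \<delta> * (of_real s1 * cis \<theta> + of_real s2 * (\<i> * cis \<theta>))))\<^sup>2
      = 2 * \<rho> * \<delta> * (- s1) - ((\<delta> * s1)\<^sup>2 + (\<delta> * s2)\<^sup>2)"
    by (simp add: power2_eq_square algebra_simps)
  also have "\<dots> \<le> 2 * \<rho> * \<delta> * (- s1)" by simp
  also have "\<dots> \<le> 2 * \<rho> * \<delta> * max (- s0) 0"
    using assms by (intro mult_left_mono) auto
  finally show ?thesis .
qed

lemma rescaled_decaying_solutions_bounded:
  fixes \<mu> :: "complex \<Rightarrow> real" and f :: "complex \<Rightarrow> complex"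
  assumes K: "K \<ge> 0" and \<Lambda>: "\<Lambda> \<ge> 0" and \<rho>: "\<rho> > 0"
    and \<mu>_le: "\<And>x. max (\<mu> x) 0 \<le> \<Lambda> * max (\<rho>\<^sup>2 - (cmod x)\<^sup>2) 0"
    and bound: "\<forall>\<epsilon> a u. 0 < \<epsilon> \<and> \<epsilon> < 1 \<and> \<bar>a\<bar> \<le> A \<and> decaying_solution \<mu> f \<epsilon> a u
      \<longrightarrow> (\<forall>x. cmod (u x) \<le> K * (sqrt (max (\<mu> x) 0) + \<epsilon> powr (1/3)))"
  shows "\<forall>s0. \<exists>C. \<forall>\<epsilon> a u \<theta> s1 s2. 0 < \<epsilon> \<and> \<epsilon> < 1 \<and> \<bar>a\<bar> \<le> A \<and> decaying_solution \<mu> f \<epsilon> a u \<and> s1 \<ge> s0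
    \<longrightarrow> \<epsilon> powr (-1/3) * cmod (u (of_real \<rho> * cis \<theta>
          + of_real (\<epsilon> powr (2/3)) * (of_real s1 * cis \<theta> + of_real s2 * (\<i> * cis \<theta>)))) \<le> C"
proof -
  define C where "C s0 = K * (sqrt (2 * \<Lambda> * \<rho> * max (- s0) 0) + 1)" for s0
  have "\<epsilon> powr (-1/3) * cmod (u x) \<le> C s0"
    if \<epsilon>: "0 < \<epsilon>" "\<epsilon> < 1" and a: "\<bar>a\<bar> \<le> A" and sol: "decaying_solution \<mu> f \<epsilon> a u" and "s0 \<le> s1"
      and x: "x = of_real \<rho> * cis \<theta> + of_real (\<epsilon> powr (2/3)) * (of_real s1 * cis \<theta> + of_real s2 * (\<i> * cis \<theta>))"
    for \<epsilon> a u \<theta> s0 s1 s2 x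
  proof -
    define e where "e = \<epsilon> powr (1/3)"
    have e: "0 < e" "\<epsilon> powr (2/3) = e\<^sup>2" "\<epsilon> powr (-1/3) * e = 1"
      using powr_one_third[OF \<epsilon>] unfolding e_def by auto
    define D where "D = 2 * \<Lambda> * \<rho> * max (- s0) 0"
    have "D \<ge> 0" using \<Lambda> \<rho> unfolding D_def by simp
    have "max (\<rho>\<^sup>2 - (cmod x)\<^sup>2) 0 \<le> 2 * \<rho> * e\<^sup>2 * max (- s0) 0"
      using rescaled_point_distance[OF \<rho> _ \<open>s0 \<le> s1\<close>, of "e\<^sup>2" \<theta> s2] \<rho>
      unfolding x e(2) by simp
    then have "\<Lambda> * max (\<rho>\<^sup>2 - (cmod x)\<^sup>2) 0 \<le> \<Lambda> * (2 * \<rho> * e\<^sup>2 * max (- s0) 0)"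
      using \<Lambda> by (rule mult_left_mono)
    also have "\<dots> = D * e\<^sup>2" unfolding D_def by (simp add: algebra_simps)
    finally have "sqrt (max (\<mu> x) 0) \<le> sqrt (D * e\<^sup>2)"
      using \<mu>_le[of x] by (intro real_sqrt_le_mono) simp
    also have "\<dots> = sqrt D * e" using e(1) by (simp add: real_sqrt_mult)
    finally have "sqrt (max (\<mu> x) 0) \<le> sqrt D * e" .
    moreover have "cmod (u x) \<le> K * (sqrt (max (\<mu> x) 0) + e)"
      using bound \<epsilon> a sol unfolding e_def by blast
    ultimately have "cmod (u x) \<le> K * (sqrt D * e + e)"
      using K by (meson add_right_mono mult_left_mono order_trans)
    then have "cmod (u x) \<le> C s0 * e" unfolding C_def D_def by (simp add: algebra_simps)
    then have "\<epsilon> powr (-1/3) * cmod (u x) \<le> \<epsilon> powr (-1/3) * (C s0 * e)"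
      by (rule mult_left_mono) simp
    also have "\<dots> = C s0" using e(3) by (simp add: algebra_simps)
    finally show ?thesis .
  qed
  then show ?thesis by blast
qed

theorem mainTheorem6:
  fixes \<mu> :: "complex \<Rightarrow> real" and \<mu>r :: "real \<Rightarrow> real"
    and f :: "complex \<Rightarrow> complex" and fr :: "real \<Rightarrow> real"
    and \<rho> :: real and A :: real
  assumes mu_smooth: "smooth \<mu>"
    and mu_rad: "\<And>x. \<mu> x = \<mu>r (cmod x)"
    and mur_smooth: "smooth \<mu>r" and mur_even: "\<And>t. \<mu>r (- t) = \<mu>r t"
    and mu_bdd: "bounded (range \<mu>)"
    and mur_decr: "\<And>t. t > 0 \<Longrightarrow> deriv \<mu>r t < 0"
    and rho_pos: "\<rho> > 0" and mur_rho: "\<mu>r \<rho> = 0"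
    and rho_unique: "\<And>t. t > 0 \<Longrightarrow> \<mu>r t = 0 \<Longrightarrow> t = \<rho>"
    and f_smooth: "smooth f"
    and f_rad: "\<And>x. f x = complex_of_real (fr (cmod x)) * (x / complex_of_real (cmod x))"
    and fr_smooth: "smooth fr" and fr_odd: "\<And>t. fr (- t) = - fr t"
    and f_L1: "integrable lborel f"
    and f_bdd: "bounded (range f)"
    and fr_pos: "\<And>t. t > 0 \<Longrightarrow> fr t > 0"
    and A_pos: "A > 0"
  shows "\<exists>\<epsilon>0>0.
     (\<exists>K>0. \<forall>\<epsilon> a u. 0 < \<epsilon> \<and> \<epsilon> < \<epsilon>0 \<and> \<bar>a\<bar> \<le> A \<and> twice_differentiable u \<and>
         (\<forall>x. complex_of_real (\<epsilon>\<^sup>2) * laplacian u x + complex_of_real (\<mu> x) * u x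
               - complex_of_real ((cmod (u x))\<^sup>2) * u x + complex_of_real (\<epsilon> * a) * f x = 0) \<and>
         (u \<longlongrightarrow> 0) at_infinity
       \<longrightarrow> (\<forall>x. cmod (u x) \<le> K * (sqrt (max (\<mu> x) 0) + \<epsilon> powr (1/3)))) \<and>
     (\<forall>s0::real. \<exists>C. \<forall>\<epsilon> a u \<theta> s1 s2. 0 < \<epsilon> \<and> \<epsilon> < \<epsilon>0 \<and> \<bar>a\<bar> \<le> A \<and> twice_differentiable u \<and>
         (\<forall>x. complex_of_real (\<epsilon>\<^sup>2) * laplacian u x + complex_of_real (\<mu> x) * u x
               - complex_of_real ((cmod (u x))\<^sup>2) * u x + complex_of_real (\<epsilon> * a) * f x = 0) \<and>
         (u \<longlongrightarrow> 0) at_infinity \<and> s1 \<ge> s0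
       \<longrightarrow> \<epsilon> powr (-1/3) * cmod (u (complex_of_real \<rho> * cis \<theta>
              + complex_of_real (\<epsilon> powr (2/3)) * (complex_of_real s1 * cis \<theta> + complex_of_real s2 * (\<i> * cis \<theta>))))
           \<le> C)"
proof -
  obtain M where f_le: "\<And>x. cmod (f x) \<le> M"
    using f_bdd unfolding bounded_iff by auto
  have "\<mu>r differentiable (at t)" for t
    using mur_smooth by (cases rule: smooth.cases) auto
  then obtain \<Lambda> C where \<Lambda>: "\<Lambda> > 0" and C: "C > 0"
    and \<mu>_le: "\<And>x. max (\<mu> x) 0 \<le> \<Lambda> * max (\<rho>\<^sup>2 - (cmod x)\<^sup>2) 0"
    and \<mu>_ge: "\<And>x. max (\<rho>\<^sup>2 - (cmod x)\<^sup>2) 0 \<le> C * max (\<mu> x) 0"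
    using radial_potential_comparable[OF mu_rad mu_bdd _ mur_decr rho_pos mur_rho] by metis
  obtain K where K: "K > 0" and bound: "\<forall>\<epsilon> a u. 0 < \<epsilon> \<and> \<epsilon> < 1 \<and> \<bar>a\<bar> \<le> A \<and> decaying_solution \<mu> f \<epsilon> a u
      \<longrightarrow> (\<forall>x. cmod (u x) \<le> K * (sqrt (max (\<mu> x) 0) + \<epsilon> powr (1/3)))"
    by (rule decaying_solution_pointwise_bound[OF f_le less_imp_le[OF A_pos] less_imp_le[OF \<Lambda>]
        less_imp_le[OF C] \<mu>_le \<mu>_ge])
  moreover note rescaled_decaying_solutions_bounded[OF less_imp_le[OF K] less_imp_le[OF \<Lambda>]
      rho_pos \<mu>_le bound]
  ultimately show ?thesis
    unfolding decaying_solution_def conj_assoc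
    by (intro exI[of _ 1] exI[of _ K] conjI) (rule zero_less_one | assumption)+
qed

end
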